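(* Let $f\colon\{0,\dots,n\}\to\mathbb{Z}$ be $\Delta_f$-near concave and $g\colon\{0,\dots,m\}\to\mathbb{Z}$ be $\Delta_g$-near concave. Then the max-plus convolution $h\colon\{0,\dots,n+m\}\to\mathbb{Z}$, $h(k)=\max_{i+j=k}f(i)+g(j)$, is $\max\{\Delta_f,\Delta_g\}$-near concave.
   Context: A function $F\colon\{0,\dots,n\}\to\mathbb{Q}$ is convex if $F(i)-F(i-1)\le F(i+1)-F(i)$ for all $1\le i\le n-1$, and concave if $-F$ is convex. For $\Delta\ge 0$, $f\colon\{0,\dots,n\}\to\mathbb{Z}$ is $\Delta$-near concave if there is a concave $\hat f\colon\{0,\dots,n\}\to\mathbb{Q}$ with $\hat f(i)-\Delta\le f(i)\le \hat f(i)$ for all $i$. *)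

theory Defs
  imports Complex_Main
begin

text \<open>Functions on {0,...,n} are represented as total functions on nat;
  only their values on {0..n} matter.\<close>

definition convex_on_upto :: "nat \<Rightarrow> (nat \<Rightarrow> rat) \<Rightarrow> bool" where
  "convex_on_upto n F \<longleftrightarrow>
     (\<forall>i. 1 \<le> i \<and> i \<le> n - 1 \<longrightarrow> F i - F (i - 1) \<le> F (i + 1) - F i)"

definition concave_on_upto :: "nat \<Rightarrow> (nat \<Rightarrow> rat) \<Rightarrow> bool" where
  "concave_on_upto n F \<longleftrightarrow> convex_on_upto n (\<lambda>i. - F i)"

definition near_concave :: "rat \<Rightarrow> nat \<Rightarrow> (nat \<Rightarrow> int) \<Rightarrow> bool" where
  "near_concave \<Delta> n f \<longleftrightarrow>
     (\<exists>fh. concave_on_upto n fh \<and>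
        (\<forall>i\<le>n. fh i - \<Delta> \<le> of_int (f i) \<and> of_int (f i) \<le> fh i))"

definition maxplus_conv :: "nat \<Rightarrow> nat \<Rightarrow> (nat \<Rightarrow> int) \<Rightarrow> (nat \<Rightarrow> int) \<Rightarrow> nat \<Rightarrow> int" where
  "maxplus_conv n m f g k = Max {f i + g j | i j. i \<le> n \<and> j \<le> m \<and> i + j = k}"

end

theory Submission
  imports Defs
begin

text \<open>
  For a slope \<open>s\<close>, call \<open>k\<close> a tilted maximum of \<open>h\<close> if it maximises \<open>h y - s y\<close>, i.e. a line of
  slope \<open>s\<close> touches the graph of \<open>h\<close> from above at \<open>k\<close>. A function is \<open>\<Delta>\<close>-near concave as soon as
  every point has a line above the graph that passes at most \<open>\<Delta>\<close> above it, because the minimum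
  of these lines is concave. Every point \<open>k\<close> of \<open>h = f \<oplus> g\<close> lies between two tilted maxima of
  \<open>h\<close> with a common slope \<open>s\<close> (the ends of the edge of the upper hull above \<open>k\<close>), and these split
  into tilted maxima \<open>i\<^sub>1, i\<^sub>2\<close> of \<open>f\<close> and \<open>j\<^sub>1, j\<^sub>2\<close> of \<open>g\<close> for the same slope. Hence \<open>k\<close> can be written
  as \<open>i + j\<close> where one summand is a tilted maximum itself and the other lies between two tilted
  maxima; by near concavity the latter is only \<open>\<Delta>\<close> below the line through them. Only one
  of the two error terms occurs, which gives \<open>max \<Delta>\<^sub>f \<Delta>\<^sub>g\<close> rather than \<open>\<Delta>\<^sub>f + \<Delta>\<^sub>g\<close>.
\<close>

definition tilt :: "(nat \<Rightarrow> int) \<Rightarrow> rat \<Rightarrow> nat \<Rightarrow> rat" where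
  "tilt h s y = of_int (h y) - s * of_nat y"

definition is_tilt_max :: "(nat \<Rightarrow> int) \<Rightarrow> nat \<Rightarrow> rat \<Rightarrow> nat \<Rightarrow> bool" where
  "is_tilt_max h N s k \<longleftrightarrow> k \<le> N \<and> (\<forall>y\<le>N. tilt h s y \<le> tilt h s k)"

definition near_support :: "(nat \<Rightarrow> int) \<Rightarrow> nat \<Rightarrow> rat \<Rightarrow> rat \<Rightarrow> nat \<Rightarrow> bool" where
  "near_support h N D s k \<longleftrightarrow> (\<forall>y\<le>N. tilt h s y \<le> tilt h s k + D)"

definition slope :: "(nat \<Rightarrow> int) \<Rightarrow> nat \<Rightarrow> nat \<Rightarrow> rat" where
  "slope h x y = (of_int (h y) - of_int (h x)) / (of_nat y - of_nat x)"

definition chord :: "(nat \<Rightarrow> int) \<Rightarrow> nat \<Rightarrow> nat \<Rightarrow> nat \<Rightarrow> rat" where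
  "chord h x y k = tilt h (slope h x y) x + slope h x y * of_nat k"

lemma tilt_add_mult: "tilt h s x + s * of_nat k = of_int (h x) + s * (of_nat k - of_nat x)"
  unfolding tilt_def by (simp add: algebra_simps)

lemma tilt_add_mult_strict_mono:
  "x < k \<Longrightarrow> s < s' \<Longrightarrow> tilt h s x + s * of_nat k < tilt h s' x + s' * of_nat k"
  unfolding tilt_add_mult by (simp add: mult_strict_right_mono)

lemma tilt_add_mult_strict_antimono:
  "k < y \<Longrightarrow> s' < s \<Longrightarrow> tilt h s y + s * of_nat k < tilt h s' y + s' * of_nat k"
  unfolding tilt_add_mult by (simp add: mult_strict_right_mono_neg)

lemma le_slope_iff:
  assumes "x < y"
  shows "s \<le> slope h x y \<longleftrightarrow> tilt h s x \<le> tilt h s y"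
proof -
  have "(0::rat) < of_nat y - of_nat x" using assms by simp
  then show ?thesis unfolding slope_def tilt_def by (simp add: le_divide_eq algebra_simps)
qed

lemma slope_le_iff:
  assumes "x < y"
  shows "slope h x y \<le> s \<longleftrightarrow> tilt h s y \<le> tilt h s x"
proof -
  have "(0::rat) < of_nat y - of_nat x" using assms by simp
  then show ?thesis unfolding slope_def tilt_def by (simp add: divide_le_eq algebra_simps)
qed

lemma tilt_slope_eq:
  assumes "x < y"
  shows "tilt h (slope h x y) x = tilt h (slope h x y) y"
proof (rule order_antisym)
  show "tilt h (slope h x y) x \<le> tilt h (slope h x y) y" using le_slope_iff[OF assms] by blast
  show "tilt h (slope h x y) y \<le> tilt h (slope h x y) x" using slope_le_iff[OF assms] by blast
qed

lemma chord_right: "x < y \<Longrightarrow> chord h x y k = tilt h (slope h x y) y + slope h x y * of_nat k"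
  unfolding chord_def using tilt_slope_eq[of x y h] by simp

lemma finite_sets_separated:
  fixes A B :: "'a::linorder set"
  assumes "finite A" "finite B" "\<forall>a\<in>A. \<forall>b\<in>B. b \<le> a"
  shows "\<exists>s. (\<forall>b\<in>B. b \<le> s) \<and> (\<forall>a\<in>A. s \<le> a)"
proof (cases "B = {}")
  case True
  then show ?thesis using \<open>finite A\<close> by (metis Min_le empty_iff)
next
  case False
  then show ?thesis using assms by (metis Max_ge Max_in)
qed

subsection \<open>Tilted maxima around every point\<close>

lemma is_tilt_max_highest_chord:
  assumes "x < k" "k < y" "y \<le> N"
    and highest: "\<And>a b. a < k \<Longrightarrow> k < b \<Longrightarrow> b \<le> N \<Longrightarrow> chord h a b k \<le> chord h x y k"
    and below: "of_int (h k) \<le> chord h x y k"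
  shows "is_tilt_max h N (slope h x y) x" "is_tilt_max h N (slope h x y) y"
proof -
  define s where "s = slope h x y"
  have "x < y" using assms by simp
  then have tilt_xy: "tilt h s x = tilt h s y" unfolding s_def by (rule tilt_slope_eq)
  \<comment> \<open>a point above the line through \<open>x\<close> and \<open>y\<close> would give a higher chord over \<open>k\<close>\<close>
  have "tilt h s z \<le> tilt h s x" if "z \<le> N" for z
  proof (rule ccontr)
    assume above: "\<not> tilt h s z \<le> tilt h s x"
    consider "z < k" | "z = k" | "k < z" by linarith
    then show False
    proof cases
      case 1
      then have "slope h z y < s"
        using above tilt_xy le_slope_iff[of z y] \<open>k < y\<close> by (metis less_trans not_le)
      then have "chord h x y k < chord h z y k"
        using 1 assms by (simp add: chord_right s_def tilt_add_mult_strict_antimono)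
      then show False using highest[OF 1 \<open>k < y\<close> \<open>y \<le> N\<close>] by simp
    next
      case 2
      then show False using above below by (simp add: chord_def s_def tilt_def)
    next
      case 3
      then have "s < slope h x z"
        using above slope_le_iff[of x z] \<open>x < k\<close> by (metis less_trans not_le)
      then have "chord h x y k < chord h x z k"
        using \<open>x < k\<close> by (simp add: chord_def s_def tilt_add_mult_strict_mono)
      then show False using highest[OF \<open>x < k\<close> 3 \<open>z \<le> N\<close>] by simp
    qed
  qed
  then show "is_tilt_max h N s x" "is_tilt_max h N s y"
    using assms tilt_xy by (auto simp: is_tilt_max_def)
qed

lemma is_tilt_max_below_chords:
  assumes "k \<le> N" and below: "\<And>x y. x < k \<Longrightarrow> k < y \<Longrightarrow> y \<le> N \<Longrightarrow> chord h x y k \<le> of_int (h k)"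
  shows "\<exists>s. is_tilt_max h N s k"
proof -
  \<comment> \<open>left slopes at \<open>k\<close> dominate right slopes, so any slope separating them supports \<open>k\<close>\<close>
  have "slope h k y \<le> slope h x k" if "x < k" "k < y" "y \<le> N" for x y
  proof -
    define s where "s = slope h x y"
    have "tilt h s x \<le> tilt h s k" using below[OF that] by (simp add: chord_def s_def tilt_def)
    moreover have "tilt h s x = tilt h s y"
      unfolding s_def using that by (intro tilt_slope_eq) simp
    ultimately show ?thesis
      using le_slope_iff[of x k] slope_le_iff[of k y] that by (metis order_trans)
  qed
  then obtain s where
    left: "\<And>x. x < k \<Longrightarrow> s \<le> slope h x k" and right: "\<And>y. k < y \<Longrightarrow> y \<le> N \<Longrightarrow> slope h k y \<le> s"
    using finite_sets_separated[of "(\<lambda>x. slope h x k) ` {..<k}" "(\<lambda>y. slope h k y) ` {k<..N}"]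
    by fastforce
  have "tilt h s y \<le> tilt h s k" if "y \<le> N" for y
    using left[of y] right[of y] le_slope_iff[of y k] slope_le_iff[of k y] that
    by (cases y k rule: linorder_cases) auto
  then show ?thesis using assms by (auto simp: is_tilt_max_def)
qed

lemma tilt_maxima_bracket:
  assumes "k \<le> N"
  shows "\<exists>s y\<^sub>1 y\<^sub>2. y\<^sub>1 \<le> k \<and> k \<le> y\<^sub>2 \<and> is_tilt_max h N s y\<^sub>1 \<and> is_tilt_max h N s y\<^sub>2"
proof (cases "\<exists>x y. x < k \<and> k < y \<and> y \<le> N \<and> of_int (h k) < chord h x y k")
  case True
  define P where "P = {(x, y). x < k \<and> k < y \<and> y \<le> N}"
  have "finite P"
    by (rule finite_subset[of _ "{..N} \<times> {..N}"]) (auto simp: P_def)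
  from True obtain x\<^sub>0 y\<^sub>0 where "(x\<^sub>0, y\<^sub>0) \<in> P" "of_int (h k) < chord h x\<^sub>0 y\<^sub>0 k"
    by (auto simp: P_def)
  let ?V = "Max ((\<lambda>(x, y). chord h x y k) ` P)"
  have "?V \<in> (\<lambda>(x, y). chord h x y k) ` P"
    using \<open>finite P\<close> \<open>(x\<^sub>0, y\<^sub>0) \<in> P\<close> by (intro Max_in) auto
  then obtain x y where "(x, y) \<in> P" and V: "chord h x y k = ?V" by auto
  then have xy: "x < k" "k < y" "y \<le> N" by (auto simp: P_def)
  have highest: "chord h a b k \<le> chord h x y k" if "a < k" "k < b" "b \<le> N" for a b
    unfolding V using \<open>finite P\<close> that by (intro Max_ge) (force simp: P_def)+
  have "of_int (h k) \<le> chord h x y k"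
    using highest[of x\<^sub>0 y\<^sub>0] \<open>(x\<^sub>0, y\<^sub>0) \<in> P\<close> \<open>of_int (h k) < chord h x\<^sub>0 y\<^sub>0 k\<close>
    by (simp add: P_def)
  then have "is_tilt_max h N (slope h x y) x" "is_tilt_max h N (slope h x y) y"
    using is_tilt_max_highest_chord[OF xy highest] by blast+
  then show ?thesis using xy by (meson less_imp_le)
next
  case False
  then show ?thesis using is_tilt_max_below_chords[OF assms] by (meson not_less order_refl)
qed

lemma concave_on_upto_increments_antimono:
  assumes "concave_on_upto n F" "a \<le> b" "b < n"
  shows "F (Suc b) - F b \<le> F (Suc a) - F a"
  using assms(2,3)
proof (induction b rule: dec_induct)
  case base
  then show ?case by simp
next
  case (step b)
  have "1 \<le> Suc b \<and> Suc b \<le> n - 1" using step.prems by simp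
  then have "F (Suc (Suc b)) - F (Suc b) \<le> F (Suc b) - F b"
    using assms(1) unfolding concave_on_upto_def convex_on_upto_def by fastforce
  with step show ?case by simp
qed

lemma concave_on_upto_diff_linear:
  "concave_on_upto n F \<Longrightarrow> concave_on_upto n (\<lambda>i. F i - (c + s * of_nat i))"
  unfolding concave_on_upto_def convex_on_upto_def by (simp add: of_nat_diff algebra_simps)

lemma concave_on_upto_nonneg_between:
  fixes G :: "nat \<Rightarrow> rat"
  assumes conc: "concave_on_upto n G" and "x \<le> z" "z \<le> y" "y \<le> n" "0 \<le> G x" "0 \<le> G y"
  shows "0 \<le> G z"
proof (cases "x = z")
  case False
  then have "z - 1 < n" "Suc (z - 1) = z" using assms by auto
  define c where "c = G z - G (z - 1)"
  have "(\<Sum>t = x..<z. c) \<le> (\<Sum>t = x..<z. G (Suc t) - G t)"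
  proof (rule sum_mono)
    fix t assume "t \<in> {x..<z}"
    then have "t \<le> z - 1" by auto
    then show "c \<le> G (Suc t) - G t"
      using concave_on_upto_increments_antimono[OF conc _ \<open>z - 1 < n\<close>] \<open>Suc (z - 1) = z\<close>
      by (simp add: c_def)
  qed
  then have lower: "of_nat (z - x) * c \<le> G z - G x"
    using \<open>x \<le> z\<close> by (simp add: sum_Suc_diff')
  have "(\<Sum>t = z..<y. G (Suc t) - G t) \<le> (\<Sum>t = z..<y. c)"
  proof (rule sum_mono)
    fix t assume "t \<in> {z..<y}"
    then have "z - 1 \<le> t" "t < n" using assms by auto
    then show "G (Suc t) - G t \<le> c"
      using concave_on_upto_increments_antimono[OF conc, of "z - 1" t] \<open>Suc (z - 1) = z\<close>
      by (simp add: c_def)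
  qed
  then have upper: "G y - G z \<le> of_nat (y - z) * c"
    using \<open>z \<le> y\<close> by (simp add: sum_Suc_diff')
  show ?thesis
  proof (cases "0 \<le> c")
    case True
    then have "0 \<le> of_nat (z - x) * c" by simp
    then show ?thesis using lower \<open>0 \<le> G x\<close> by linarith
  next
    case False
    then have "of_nat (y - z) * c \<le> 0" by (simp add: mult_nonneg_nonpos)
    then show ?thesis using upper \<open>0 \<le> G y\<close> by linarith
  qed
qed (use assms in simp)

subsection \<open>Near supporting lines\<close>

lemma near_support_mono:
  "near_support h N D s k \<Longrightarrow> D \<le> D' \<Longrightarrow> near_support h N D' s k"
  unfolding near_support_def by force

lemma is_tilt_max_imp_near_support: "is_tilt_max h N s k \<Longrightarrow> near_support h N 0 s k"
  unfolding is_tilt_max_def near_support_def by simp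

lemma near_support_between:
  assumes "near_concave D n f" and x: "is_tilt_max f n s x" and y: "is_tilt_max f n s y"
    and "x \<le> z" "z \<le> y"
  shows "near_support f n D s z"
proof -
  obtain F where conc: "concave_on_upto n F"
    and bounds: "\<And>i. i \<le> n \<Longrightarrow> F i - D \<le> of_int (f i) \<and> of_int (f i) \<le> F i"
    using assms(1) unfolding near_concave_def by blast
  define c where "c = tilt f s x"
  have "tilt f s y = c" using x y unfolding c_def is_tilt_max_def by (meson order_antisym)
  define G where "G i = F i - (c + s * of_nat i)" for i
  have "0 \<le> G x" "0 \<le> G y"
    using bounds[of x] bounds[of y] x y \<open>tilt f s y = c\<close>
    by (auto simp: G_def c_def tilt_def is_tilt_max_def)
  then have "0 \<le> G z"
    using concave_on_upto_nonneg_between[OF concave_on_upto_diff_linear[OF conc]] assms y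
    by (auto simp: G_def is_tilt_max_def)
  then have "c \<le> tilt f s z + D"
    using bounds[of z] \<open>z \<le> y\<close> y by (auto simp: G_def tilt_def is_tilt_max_def)
  then show ?thesis using x unfolding near_support_def is_tilt_max_def c_def by force
qed

text \<open>The minimum of the near supporting lines is the required concave majorant.\<close>

lemma near_concave_if_near_supported:
  assumes "\<forall>k\<le>N. \<exists>s. near_support h N D s k"
  shows "near_concave D N h"
proof -
  obtain sl where sl: "\<And>k. k \<le> N \<Longrightarrow> near_support h N D (sl k) k"
    using assms by metis
  define L where "L c x = of_int (h c) + D + sl c * (of_nat x - of_nat c)" for c x :: nat
  define H where "H x = Min ((\<lambda>c. L c x) ` {..N})" for x
  have H_le: "H x \<le> L c x" if "c \<le> N" for c x
    unfolding H_def using that by (intro Min_le) auto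
  have H_attained: "\<exists>c\<le>N. H x = L c x" for x
  proof -
    have "H x \<in> (\<lambda>c. L c x) ` {..N}" unfolding H_def by (rule Min_in) auto
    then show ?thesis by auto
  qed
  have "concave_on_upto N H"
    unfolding concave_on_upto_def convex_on_upto_def
  proof (intro allI impI)
    fix i assume i: "1 \<le> i \<and> i \<le> N - 1"
    obtain c where c: "c \<le> N" "H i = L c i" using H_attained by blast
    have "L c (i - 1) + L c (i + 1) = 2 * L c i"
      unfolding L_def using i by (simp add: of_nat_diff algebra_simps)
    then show "- H i - - H (i - 1) \<le> - H (i + 1) - - H i"
      using H_le[OF c(1), of "i - 1"] H_le[OF c(1), of "i + 1"] c(2) by linarith
  qed
  moreover have "H i - D \<le> of_int (h i) \<and> of_int (h i) \<le> H i" if "i \<le> N" for i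
  proof
    show "H i - D \<le> of_int (h i)" using H_le[OF that, of i] by (simp add: L_def)
    obtain c where c: "c \<le> N" "H i = L c i" using H_attained by blast
    have "tilt h (sl c) i \<le> tilt h (sl c) c + D"
      using sl[OF c(1)] that unfolding near_support_def by blast
    then show "of_int (h i) \<le> H i" using c(2) by (simp add: L_def tilt_def algebra_simps)
  qed
  ultimately show ?thesis unfolding near_concave_def by blast
qed

subsection \<open>Max-plus convolution\<close>

lemma finite_maxplus_conv_candidates:
  "finite {f i + g j | i j. i \<le> n \<and> j \<le> (m::nat) \<and> i + j = k}"
  by (rule finite_subset[of _ "(\<lambda>(i, j). f i + g j) ` ({..n} \<times> {..m})"]) auto

lemma maxplus_conv_ge: "i \<le> n \<Longrightarrow> j \<le> m \<Longrightarrow> f i + g j \<le> maxplus_conv n m f g (i + j)"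
  unfolding maxplus_conv_def by (rule Max_ge[OF finite_maxplus_conv_candidates]) blast

lemma maxplus_conv_attained:
  assumes "k \<le> n + m"
  obtains i j where "i \<le> n" "j \<le> m" "i + j = k" "maxplus_conv n m f g k = f i + g j"
proof -
  have "min k n \<le> n" "k - min k n \<le> m" "min k n + (k - min k n) = k" using assms by auto
  then have "f (min k n) + g (k - min k n) \<in> {f i + g j | i j. i \<le> n \<and> j \<le> m \<and> i + j = k}"
    by blast
  then have "{f i + g j | i j. i \<le> n \<and> j \<le> m \<and> i + j = k} \<noteq> {}" by blast
  then have "maxplus_conv n m f g k \<in> {f i + g j | i j. i \<le> n \<and> j \<le> m \<and> i + j = k}"
    unfolding maxplus_conv_def by (rule Max_in[OF finite_maxplus_conv_candidates])
  then show thesis using that by blast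
qed

lemma tilt_add: "h (i + j) = f i + g j \<Longrightarrow> tilt h s (i + j) = tilt f s i + tilt g s j"
  unfolding tilt_def by (simp add: algebra_simps)

lemma tilt_le_maxplus_conv:
  "i \<le> n \<Longrightarrow> j \<le> m \<Longrightarrow> tilt f s i + tilt g s j \<le> tilt (maxplus_conv n m f g) s (i + j)"
  using maxplus_conv_ge[of i n j m f g] unfolding tilt_def by (simp add: algebra_simps)

lemma is_tilt_max_maxplus_conv_split:
  assumes max: "is_tilt_max (maxplus_conv n m f g) (n + m) s (i + j)" and "i \<le> n" "j \<le> m"
    and split: "maxplus_conv n m f g (i + j) = f i + g j"
  shows "is_tilt_max f n s i" "is_tilt_max g m s j"
proof -
  have "tilt f s a + tilt g s b \<le> tilt f s i + tilt g s j" if "a \<le> n" "b \<le> m" for a b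
    using tilt_le_maxplus_conv[OF that, where s = s] max that
      tilt_add[of "maxplus_conv n m f g" i j f g s] split
    unfolding is_tilt_max_def by (metis add_mono order_trans)
  from this[of _ j] this[of i] show "is_tilt_max f n s i" "is_tilt_max g m s j"
    using \<open>i \<le> n\<close> \<open>j \<le> m\<close> unfolding is_tilt_max_def by auto
qed

lemma near_support_maxplus_conv:
  assumes "near_support f n D\<^sub>f s a" "near_support g m D\<^sub>g s b" "a \<le> n" "b \<le> m"
  shows "near_support (maxplus_conv n m f g) (n + m) (D\<^sub>f + D\<^sub>g) s (a + b)"
  unfolding near_support_def
proof (intro allI impI)
  let ?h = "maxplus_conv n m f g"
  fix y assume "y \<le> n + m"
  then obtain i j where ij: "i \<le> n" "j \<le> m" "i + j = y" "maxplus_conv n m f g y = f i + g j"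
    by (rule maxplus_conv_attained)
  have "tilt ?h s y = tilt f s i + tilt g s j"
    using tilt_add[of ?h i j f g s] ij by simp
  also have "\<dots> \<le> tilt f s a + D\<^sub>f + (tilt g s b + D\<^sub>g)"
    using assms ij unfolding near_support_def by (meson add_mono)
  also have "\<dots> \<le> tilt ?h s (a + b) + (D\<^sub>f + D\<^sub>g)"
    using tilt_le_maxplus_conv[OF assms(3,4), where f = f and g = g and s = s] by simp
  finally show "tilt ?h s y \<le> tilt ?h s (a + b) + (D\<^sub>f + D\<^sub>g)" .
qed

lemma near_support_maxplus_conv_between:
  assumes f: "near_concave \<Delta>\<^sub>f n f" and g: "near_concave \<Delta>\<^sub>g m g"
    and i: "is_tilt_max f n s i\<^sub>1" "is_tilt_max f n s i\<^sub>2"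
    and j: "is_tilt_max g m s j\<^sub>1" "is_tilt_max g m s j\<^sub>2"
    and k: "i\<^sub>1 + j\<^sub>1 \<le> k" "k \<le> i\<^sub>2 + j\<^sub>2"
  shows "near_support (maxplus_conv n m f g) (n + m) (max \<Delta>\<^sub>f \<Delta>\<^sub>g) s k"
proof (cases "k \<le> i\<^sub>1 + j\<^sub>2")
  case True
  have "near_support g m \<Delta>\<^sub>g s (k - i\<^sub>1)"
    using near_support_between[OF g j] k True by simp
  moreover have "k - i\<^sub>1 \<le> m" "i\<^sub>1 \<le> n" using j(2) i(1) True by (auto simp: is_tilt_max_def)
  ultimately have "near_support (maxplus_conv n m f g) (n + m) (0 + \<Delta>\<^sub>g) s (i\<^sub>1 + (k - i\<^sub>1))"
    using near_support_maxplus_conv is_tilt_max_imp_near_support[OF i(1)] by blast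
  then show ?thesis using k by (auto elim: near_support_mono)
next
  case False
  have "near_support f n \<Delta>\<^sub>f s (k - j\<^sub>2)"
    using near_support_between[OF f i] k False by simp
  moreover have "k - j\<^sub>2 \<le> n" "j\<^sub>2 \<le> m" using i(2) j(2) k by (auto simp: is_tilt_max_def)
  ultimately have "near_support (maxplus_conv n m f g) (n + m) (\<Delta>\<^sub>f + 0) s (k - j\<^sub>2 + j\<^sub>2)"
    using near_support_maxplus_conv is_tilt_max_imp_near_support[OF j(2)] by blast
  then show ?thesis using False by (auto elim: near_support_mono)
qed

theorem mainTheorem5:
  fixes f g :: "nat \<Rightarrow> int" and n m :: nat and \<Delta>f \<Delta>g :: rat
  assumes "\<Delta>f \<ge> 0" and "\<Delta>g \<ge> 0"
    and "near_concave \<Delta>f n f" and "near_concave \<Delta>g m g"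
  shows "near_concave (max \<Delta>f \<Delta>g) (n + m) (maxplus_conv n m f g)"
proof (rule near_concave_if_near_supported, intro allI impI)
  let ?h = "maxplus_conv n m f g"
  fix k assume "k \<le> n + m"
  then obtain s y\<^sub>1 y\<^sub>2 where y: "y\<^sub>1 \<le> k" "k \<le> y\<^sub>2"
    "is_tilt_max ?h (n + m) s y\<^sub>1" "is_tilt_max ?h (n + m) s y\<^sub>2"
    using tilt_maxima_bracket by blast
  obtain i\<^sub>1 j\<^sub>1 where ij\<^sub>1: "i\<^sub>1 \<le> n" "j\<^sub>1 \<le> m" "i\<^sub>1 + j\<^sub>1 = y\<^sub>1" "?h y\<^sub>1 = f i\<^sub>1 + g j\<^sub>1"
    using maxplus_conv_attained[of y\<^sub>1 n m] y(3) unfolding is_tilt_max_def by blast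
  obtain i\<^sub>2 j\<^sub>2 where ij\<^sub>2: "i\<^sub>2 \<le> n" "j\<^sub>2 \<le> m" "i\<^sub>2 + j\<^sub>2 = y\<^sub>2" "?h y\<^sub>2 = f i\<^sub>2 + g j\<^sub>2"
    using maxplus_conv_attained[of y\<^sub>2 n m] y(4) unfolding is_tilt_max_def by blast
  have "is_tilt_max f n s i\<^sub>1" "is_tilt_max g m s j\<^sub>1"
    using is_tilt_max_maxplus_conv_split[of n m f g s i\<^sub>1 j\<^sub>1] ij\<^sub>1 y(3) by auto
  moreover have "is_tilt_max f n s i\<^sub>2" "is_tilt_max g m s j\<^sub>2"
    using is_tilt_max_maxplus_conv_split[of n m f g s i\<^sub>2 j\<^sub>2] ij\<^sub>2 y(4) by auto
  ultimately show "\<exists>s. near_support ?h (n + m) (max \<Delta>f \<Delta>g) s k"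
    using near_support_maxplus_conv_between[OF assms(3,4)] y(1,2) ij\<^sub>1(3) ij\<^sub>2(3) by blast
qed

end
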